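(* Let $G$ be an étale groupoid and let $F\subset G^{(0)}$ be an open $G$-full subset. (1) If there is a continuous map $\theta:G^{(0)}\to G$ with $r(\theta(x))=x$ and $s(\theta(x))\in F$ for all $x\in G^{(0)}$, then $G$ is homologically similar to $G|F$. (2) If $G^{(0)}$ is $\sigma$-compact and totally disconnected, then $G$ is homologically similar to $G|F$.
   Context: An étale groupoid is a locally compact Hausdorff groupoid whose range map $r$ is a local homeomorphism; $s$ is the source map. $F\subset G^{(0)}$ is $G$-full if for every $x\in G^{(0)}$ there is $g$ with $r(g)=x$, $s(g)\in F$. $G|F=r^{-1}(F)\cap s^{-1}(F)$ is the reduction (an étale subgroupoid). A homomorphism is a continuous map preserving products of composable pairs; it is étale if it is a local homeomorphism. Homomorphisms $\rho,\sigma:G\to H$ are similar if there is continuous $\theta:G^{(0)}\to H$ with $\theta(r(g))\rho(g)=\sigma(g)\theta(s(g))$ for all $g$. $G,H$ are homologically similar if there are étale homomorphisms $\rho:G\to H$, $\sigma:H\to G$ with $\sigma\circ\rho$ similar to $\mathrm{id}_G$ and $\rho\circ\sigma$ similar to $\mathrm{id}_H$. *)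

theory Defs
  imports "HOL-Analysis.Analysis"
begin

record 'a groupoid =
  gtop :: "'a topology"
  gunits :: "'a set"
  grng :: "'a \<Rightarrow> 'a"
  gsrc :: "'a \<Rightarrow> 'a"
  gmult :: "'a \<Rightarrow> 'a \<Rightarrow> 'a"
  ginv :: "'a \<Rightarrow> 'a"

definition garr :: "('a, 'b) groupoid_scheme \<Rightarrow> 'a set" where
  "garr G = topspace (gtop G)"

definition gcomposable :: "('a, 'b) groupoid_scheme \<Rightarrow> ('a \<times> 'a) set" where
  "gcomposable G = {(g, h). g \<in> garr G \<and> h \<in> garr G \<and> gsrc G g = grng G h}"

definition unit_top :: "('a, 'b) groupoid_scheme \<Rightarrow> 'a topology" where
  "unit_top G = subtopology (gtop G) (gunits G)"

definition local_homeo :: "'a topology \<Rightarrow> 'b topology \<Rightarrow> ('a \<Rightarrow> 'b) \<Rightarrow> bool" where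
  "local_homeo X Y f \<longleftrightarrow> f \<in> topspace X \<rightarrow> topspace Y \<and>
     (\<forall>x \<in> topspace X. \<exists>U. openin X U \<and> x \<in> U \<and> openin Y (f ` U) \<and>
        homeomorphic_map (subtopology X U) (subtopology Y (f ` U)) f)"

definition groupoid :: "('a, 'b) groupoid_scheme \<Rightarrow> bool" where
  "groupoid G \<longleftrightarrow>
     gunits G \<subseteq> garr G \<and>
     (\<forall>g \<in> garr G. grng G g \<in> gunits G \<and> gsrc G g \<in> gunits G) \<and>
     (\<forall>x \<in> gunits G. grng G x = x \<and> gsrc G x = x) \<and>
     (\<forall>(g, h) \<in> gcomposable G. gmult G g h \<in> garr G \<and>
        grng G (gmult G g h) = grng G g \<and> gsrc G (gmult G g h) = gsrc G h) \<and>
     (\<forall>g \<in> garr G. \<forall>h \<in> garr G. \<forall>k \<in> garr G. gsrc G g = grng G h \<longrightarrow> gsrc G h = grng G k \<longrightarrow>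
        gmult G (gmult G g h) k = gmult G g (gmult G h k)) \<and>
     (\<forall>g \<in> garr G. gmult G (grng G g) g = g \<and> gmult G g (gsrc G g) = g) \<and>
     (\<forall>g \<in> garr G. ginv G g \<in> garr G \<and> grng G (ginv G g) = gsrc G g \<and>
        gsrc G (ginv G g) = grng G g \<and>
        gmult G g (ginv G g) = grng G g \<and> gmult G (ginv G g) g = gsrc G g)"

definition topological_groupoid :: "('a, 'b) groupoid_scheme \<Rightarrow> bool" where
  "topological_groupoid G \<longleftrightarrow> groupoid G \<and>
     continuous_map (gtop G) (unit_top G) (grng G) \<and>
     continuous_map (gtop G) (unit_top G) (gsrc G) \<and>
     continuous_map (gtop G) (gtop G) (ginv G) \<and>
     continuous_map (subtopology (prod_topology (gtop G) (gtop G)) (gcomposable G)) (gtop G)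
        (\<lambda>(g, h). gmult G g h)"

definition etale_groupoid :: "('a, 'b) groupoid_scheme \<Rightarrow> bool" where
  "etale_groupoid G \<longleftrightarrow> topological_groupoid G \<and>
     locally_compact_space (gtop G) \<and> Hausdorff_space (gtop G) \<and>
     local_homeo (gtop G) (unit_top G) (grng G)"

definition G_full :: "('a, 'b) groupoid_scheme \<Rightarrow> 'a set \<Rightarrow> bool" where
  "G_full G F \<longleftrightarrow> F \<subseteq> gunits G \<and>
     (\<forall>x \<in> gunits G. \<exists>g \<in> garr G. grng G g = x \<and> gsrc G g \<in> F)"

definition reduction :: "'a groupoid \<Rightarrow> 'a set \<Rightarrow> 'a groupoid" where
  "reduction G F = G\<lparr> gtop := subtopology (gtop G) {g \<in> garr G. grng G g \<in> F \<and> gsrc G g \<in> F},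
                     gunits := F \<rparr>"

definition groupoid_hom :: "'a groupoid \<Rightarrow> 'c groupoid \<Rightarrow> ('a \<Rightarrow> 'c) \<Rightarrow> bool" where
  "groupoid_hom G H f \<longleftrightarrow> continuous_map (gtop G) (gtop H) f \<and>
     (\<forall>(g, h) \<in> gcomposable G. (f g, f h) \<in> gcomposable H \<and>
        f (gmult G g h) = gmult H (f g) (f h))"

definition etale_hom :: "'a groupoid \<Rightarrow> 'c groupoid \<Rightarrow> ('a \<Rightarrow> 'c) \<Rightarrow> bool" where
  "etale_hom G H f \<longleftrightarrow> groupoid_hom G H f \<and> local_homeo (gtop G) (gtop H) f"

definition similar :: "'a groupoid \<Rightarrow> 'c groupoid \<Rightarrow> ('a \<Rightarrow> 'c) \<Rightarrow> ('a \<Rightarrow> 'c) \<Rightarrow> bool" where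
  "similar G H \<rho> \<sigma> \<longleftrightarrow> (\<exists>\<theta>. continuous_map (unit_top G) (gtop H) \<theta> \<and>
     (\<forall>g \<in> garr G. (\<theta> (grng G g), \<rho> g) \<in> gcomposable H \<and>
        (\<sigma> g, \<theta> (gsrc G g)) \<in> gcomposable H \<and>
        gmult H (\<theta> (grng G g)) (\<rho> g) = gmult H (\<sigma> g) (\<theta> (gsrc G g))))"

definition homologically_similar :: "'a groupoid \<Rightarrow> 'c groupoid \<Rightarrow> bool" where
  "homologically_similar G H \<longleftrightarrow> (\<exists>\<rho> \<sigma>. etale_hom G H \<rho> \<and> etale_hom H G \<sigma> \<and>
     similar G G (\<sigma> \<circ> \<rho>) id \<and> similar H H (\<rho> \<circ> \<sigma>) id)"

definition sigma_compact_space :: "'a topology \<Rightarrow> bool" where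
  "sigma_compact_space X \<longleftrightarrow> (\<exists>K :: nat \<Rightarrow> 'a set. (\<forall>n. compactin X (K n)) \<and>
     topspace X = (\<Union>n. K n))"

definition totally_disconnected_space :: "'a topology \<Rightarrow> bool" where
  "totally_disconnected_space X \<longleftrightarrow>
     (\<forall>S. connectedin X S \<longrightarrow> (\<exists>a. S \<subseteq> {a}))"

end

theory Submission
  imports Defs
begin

(* If theta is a continuous section of the range map whose sources lie in F, conjugation
   rho g = theta(r g)^-1 g theta(s g) is a continuous homomorphism from G into G|F, and
   together with the inclusion of G|F it forms a homological similarity: in both directions
   theta itself conjugates the composite to the identity.  rho is a local homeomorphism since
   near every arrow it has the explicit inverse h |-> psi_a(r h) h psi_b(s h)^-1, where psi_a and
   psi_b invert the source map on open bisections around theta(r g) and theta(s g).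

   Fullness of F gives such sections locally.  If the unit space is totally disconnected it has a
   base of clopen sets (being locally compact Hausdorff), so the local sections can be taken over
   clopen sets; sigma-compactness leaves countably many of them, and after disjointifying the
   clopen sets the local sections glue to a global one. *)

lemma local_homeoI:
  assumes f: "continuous_map X Y f"
    and inverse: "\<And>x. x \<in> topspace X \<Longrightarrow> \<exists>U V g. openin X U \<and> x \<in> U \<and> openin Y V \<and>
        continuous_map (subtopology Y V) X g \<and>
        (\<forall>u\<in>U. f u \<in> V \<and> g (f u) = u) \<and> (\<forall>v\<in>V. g v \<in> U \<and> f (g v) = v)"
  shows "local_homeo X Y f"
  unfolding local_homeo_def
proof (intro conjI ballI)
  show "f \<in> topspace X \<rightarrow> topspace Y"
    using continuous_map_funspace[OF f] .
  fix x assume x: "x \<in> topspace X"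
  obtain U V g where UV: "openin X U" "x \<in> U" "openin Y V"
      "continuous_map (subtopology Y V) X g"
      "\<forall>u\<in>U. f u \<in> V \<and> g (f u) = u" "\<forall>v\<in>V. g v \<in> U \<and> f (g v) = v"
    using inverse[OF x] by blast
  have image: "f ` U = V"
  proof
    show "f ` U \<subseteq> V" using UV(5) by blast
    show "V \<subseteq> f ` U" using UV(6) by (metis image_eqI subsetI)
  qed
  have "homeomorphic_maps (subtopology X U) (subtopology Y V) f g"
    unfolding homeomorphic_maps_def
  proof (intro conjI)
    show "continuous_map (subtopology X U) (subtopology Y V) f"
      using UV(5) by (intro continuous_map_into_subtopology continuous_map_from_subtopology f) auto
    show "continuous_map (subtopology Y V) (subtopology X U) g"
      using UV(4,6) by (intro continuous_map_into_subtopology) auto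
  qed (use UV(5,6) in auto)
  then have "homeomorphic_map (subtopology X U) (subtopology Y (f ` U)) f"
    unfolding image using homeomorphic_map_maps by blast
  then show "\<exists>U. openin X U \<and> x \<in> U \<and> openin Y (f ` U) \<and>
      homeomorphic_map (subtopology X U) (subtopology Y (f ` U)) f"
    using UV(1-3) image by auto
qed

lemma sigma_compact_space_countable_subcover:
  assumes "sigma_compact_space X" "\<And>U. U \<in> \<U> \<Longrightarrow> openin X U" "topspace X \<subseteq> \<Union>\<U>"
  obtains \<D> where "countable \<D>" "\<D> \<subseteq> \<U>" "topspace X \<subseteq> \<Union>\<D>"
proof -
  obtain K :: "nat \<Rightarrow> 'a set" where K: "\<And>n. compactin X (K n)" "topspace X = (\<Union>n. K n)"
    using assms(1) unfolding sigma_compact_space_def by auto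
  have "\<exists>\<D>. finite \<D> \<and> \<D> \<subseteq> \<U> \<and> K n \<subseteq> \<Union>\<D>" for n
  proof -
    have "K n \<subseteq> \<Union>\<U>"
      using K(2) assms(3) by blast
    moreover have "\<forall>U\<in>\<U>. openin X U"
      using assms(2) by blast
    ultimately show ?thesis
      using K(1)[of n] unfolding compactin_def by blast
  qed
  then obtain \<D> where \<D>: "\<And>n. finite (\<D> n)" "\<And>n. \<D> n \<subseteq> \<U>" "\<And>n. K n \<subseteq> \<Union>(\<D> n)"
    by metis
  show thesis
  proof (rule that[of "\<Union>n. \<D> n"])
    show "countable (\<Union>n. \<D> n)"
      using \<D>(1) by (blast intro: countable_UN countable_finite)
    show "(\<Union>n. \<D> n) \<subseteq> \<U>"
      using \<D>(2) by blast
    show "topspace X \<subseteq> \<Union>(\<Union>n. \<D> n)"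
      unfolding K(2) using \<D>(3) by blast
  qed
qed

lemma locally_compact_totally_disconnected_clopen_base:
  assumes "locally_compact_space X" "Hausdorff_space X" "totally_disconnected_space X"
    and W: "openin X W" and "x \<in> W"
  obtains U where "openin X U" "closedin X U" "x \<in> U" "U \<subseteq> W"
proof -
  have x: "x \<in> topspace X"
    using openin_subset[OF W] \<open>x \<in> W\<close> by blast
  obtain a where "connected_component_of_set X x \<subseteq> {a}"
    using assms(3) connectedin_connected_component_of[of X x]
    unfolding totally_disconnected_space_def by blast
  moreover have "x \<in> connected_component_of_set X x"
    using x by (simp add: connected_component_of_refl)
  ultimately have "connected_component_of_set X x = {x}"
    by blast
  then have "{x} \<in> connected_components_of X"
    using connected_component_in_connected_components_of[of X x] x by simp
  moreover have "compactin X {x}" "{x} \<subseteq> W"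
    using x \<open>x \<in> W\<close> by simp_all
  ultimately obtain U V where UV: "openin X U" "openin X V" "disjnt U V" "U \<union> V = topspace X"
      "{x} \<subseteq> U" "U \<subseteq> W"
    using wilder_locally_compact_component_thm[OF assms(1,2) _ _ W] by blast
  then have "topspace X - U = V"
    using openin_subset[OF UV(2)] by (auto simp: disjnt_def)
  then have "closedin X U"
    using UV(1,2) openin_subset[OF UV(1)] by (simp add: closedin_def)
  then show thesis
    using that UV(1,5,6) by blast
qed

lemma pasting_lemma_clopen_sequence:
  fixes e :: "nat \<Rightarrow> 'a set"
  assumes clopen: "\<And>n. openin X (e n)" "\<And>n. closedin X (e n)"
    and cover: "topspace X \<subseteq> (\<Union>n. e n)"
    and cont: "\<And>n. continuous_map (subtopology X (e n)) Y (\<phi> n)"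
  obtains \<theta> where "continuous_map X Y \<theta>" "\<And>x. x \<in> topspace X \<Longrightarrow> \<exists>n. x \<in> e n \<and> \<theta> x = \<phi> n x"
proof -
  define T where "T n = e n - (\<Union>j<n. e j)" for n
  have T_open: "openin X (T n)" for n
  proof -
    have "closedin X (\<Union>j<n. e j)"
      using clopen(2) by (intro closedin_Union) auto
    then show ?thesis
      unfolding T_def using clopen(1) by (rule openin_diff[rotated])
  qed
  have T_sub: "T n \<subseteq> e n" for n
    unfolding T_def by blast
  have T_disjoint: "x \<notin> T j" if "x \<in> T i" "i < j" for x i j
    using that unfolding T_def by blast
  have T_cover: "x \<in> T (LEAST n. x \<in> e n)" if x: "x \<in> topspace X" for x
  proof -
    obtain n where "x \<in> e n"
      using x cover by blast
    then have "x \<in> e (LEAST n. x \<in> e n)"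
      by (rule LeastI)
    moreover have "x \<notin> e j" if "j < (LEAST n. x \<in> e n)" for j
      using not_less_Least[OF that] .
    ultimately show ?thesis
      unfolding T_def by blast
  qed
  obtain \<theta> where \<theta>: "continuous_map X Y \<theta>" "\<And>x n. x \<in> topspace X \<inter> T n \<Longrightarrow> \<theta> x = \<phi> n x"
  proof (rule pasting_lemma_exists[where X=X and I=UNIV and T=T and Y=Y and f=\<phi>])
    show "topspace X \<subseteq> (\<Union>n\<in>UNIV. T n)"
      using T_cover by blast
    show "continuous_map (subtopology X (T n)) Y (\<phi> n)" for n
      using continuous_map_from_subtopology_mono[OF cont T_sub] .
    show "\<phi> i x = \<phi> j x" if "x \<in> topspace X \<inter> T i \<inter> T j" for i j x
      using that T_disjoint[of x i j] T_disjoint[of x j i] by (cases i j rule: linorder_cases) auto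
  qed (use T_open that in auto)
  moreover have "\<exists>n. x \<in> e n \<and> \<theta> x = \<phi> n x" if "x \<in> topspace X" for x
    using that T_cover[OF that] T_sub \<theta>(2) by blast
  ultimately show thesis
    using that by blast
qed

lemma sigma_compact_clopen_pasting:
  assumes sigma: "sigma_compact_space X"
    and local: "\<And>x. x \<in> topspace X \<Longrightarrow> \<exists>C f. openin X C \<and> closedin X C \<and> x \<in> C \<and> P C f"
    and cont: "\<And>C f. P C f \<Longrightarrow> continuous_map (subtopology X C) Y f"
  obtains \<theta> where "continuous_map X Y \<theta>" "\<And>x. x \<in> topspace X \<Longrightarrow> \<exists>C f. x \<in> C \<and> P C f \<and> \<theta> x = f x"
proof -
  define \<U> where "\<U> = {C. openin X C \<and> closedin X C \<and> (\<exists>f. P C f)}"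
  have "topspace X \<subseteq> \<Union>\<U>"
    using local unfolding \<U>_def by blast
  then obtain \<D> where \<D>: "countable \<D>" "\<D> \<subseteq> \<U>" "topspace X \<subseteq> \<Union>\<D>"
    using sigma_compact_space_countable_subcover[OF sigma, of \<U>] unfolding \<U>_def by blast
  show thesis
  proof (cases "\<D> = {}")
    case True
    then have "continuous_map X Y \<theta>" for \<theta>
      using \<D>(3) by (simp add: continuous_map_def)
    then show thesis
      using that True \<D>(3) by blast
  next
    case False
    define e where "e = from_nat_into \<D>"
    have e: "e n \<in> \<U>" for n
      unfolding e_def using from_nat_into[OF False] \<D>(2) by blast
    define f where "f n = (SOME f. P (e n) f)" for n
    have f: "P (e n) (f n)" for n
      using e[of n] unfolding f_def \<U>_def by (metis (mono_tags, lifting) mem_Collect_eq someI)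
    obtain \<theta> where \<theta>: "continuous_map X Y \<theta>" "\<And>x. x \<in> topspace X \<Longrightarrow> \<exists>n. x \<in> e n \<and> \<theta> x = f n x"
    proof (rule pasting_lemma_clopen_sequence[of X e])
      show "openin X (e n)" "closedin X (e n)" for n
        using e[of n] unfolding \<U>_def by blast+
      show "topspace X \<subseteq> (\<Union>n. e n)"
        using \<D>(3) range_from_nat_into[OF False \<D>(1)] unfolding e_def by blast
      show "continuous_map (subtopology X (e n)) Y (f n)" for n
        using cont[OF f] .
    qed (rule that)
    then show thesis
      using that f by metis
  qed
qed

section \<open>Groupoids and etale groupoids\<close>

context
  fixes G :: "('a, 'b) groupoid_scheme"
  assumes groupoid: "groupoid G"
begin

lemma garr_of_gunits: "x \<in> gunits G \<Longrightarrow> x \<in> garr G"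
  using groupoid unfolding groupoid_def by blast

lemma grng_in_gunits [simp]: "g \<in> garr G \<Longrightarrow> grng G g \<in> gunits G"
  and gsrc_in_gunits [simp]: "g \<in> garr G \<Longrightarrow> gsrc G g \<in> gunits G"
  and grng_unit [simp]: "x \<in> gunits G \<Longrightarrow> grng G x = x"
  and gsrc_unit [simp]: "x \<in> gunits G \<Longrightarrow> gsrc G x = x"
  using groupoid unfolding groupoid_def by blast+

context
  fixes g h
  assumes g: "g \<in> garr G" and h: "h \<in> garr G" and gh: "gsrc G g = grng G h"
begin

lemma gmult_in_garr [simp]: "gmult G g h \<in> garr G"
  and grng_gmult [simp]: "grng G (gmult G g h) = grng G g"
  and gsrc_gmult [simp]: "gsrc G (gmult G g h) = gsrc G h"
  using groupoid g h gh unfolding groupoid_def gcomposable_def by blast+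

end

lemma gmult_assoc [simp]:
  "\<lbrakk>g \<in> garr G; h \<in> garr G; k \<in> garr G; gsrc G g = grng G h; gsrc G h = grng G k\<rbrakk>
    \<Longrightarrow> gmult G (gmult G g h) k = gmult G g (gmult G h k)"
  using groupoid unfolding groupoid_def by blast

lemma gmult_unit_left [simp]: "\<lbrakk>g \<in> garr G; x = grng G g\<rbrakk> \<Longrightarrow> gmult G x g = g"
  and gmult_unit_right [simp]: "\<lbrakk>g \<in> garr G; x = gsrc G g\<rbrakk> \<Longrightarrow> gmult G g x = g"
  using groupoid unfolding groupoid_def by blast+

lemma ginv_in_garr [simp]: "g \<in> garr G \<Longrightarrow> ginv G g \<in> garr G"
  and grng_ginv [simp]: "g \<in> garr G \<Longrightarrow> grng G (ginv G g) = gsrc G g"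
  and gsrc_ginv [simp]: "g \<in> garr G \<Longrightarrow> gsrc G (ginv G g) = grng G g"
  and gmult_ginv_right [simp]: "g \<in> garr G \<Longrightarrow> gmult G g (ginv G g) = grng G g"
  and gmult_ginv_left [simp]: "g \<in> garr G \<Longrightarrow> gmult G (ginv G g) g = gsrc G g"
  using groupoid unfolding groupoid_def by blast+

lemma gmult_ginv_cancel_left [simp]:
  "\<lbrakk>g \<in> garr G; h \<in> garr G; grng G h = grng G g\<rbrakk> \<Longrightarrow> gmult G g (gmult G (ginv G g) h) = h"
  by (metis gmult_assoc ginv_in_garr gmult_ginv_right grng_ginv gsrc_ginv gmult_unit_left)

lemma ginv_gmult_cancel_left [simp]:
  "\<lbrakk>g \<in> garr G; h \<in> garr G; gsrc G g = grng G h\<rbrakk> \<Longrightarrow> gmult G (ginv G g) (gmult G g h) = h"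
  by (metis gmult_assoc ginv_in_garr gmult_ginv_left grng_ginv gsrc_ginv gmult_unit_left)

lemma ginv_ginv [simp]: "g \<in> garr G \<Longrightarrow> ginv G (ginv G g) = g"
  by (metis ginv_gmult_cancel_left ginv_in_garr gmult_ginv_left grng_ginv gsrc_ginv gmult_unit_right)

end

lemma topspace_unit_top: "groupoid G \<Longrightarrow> topspace (unit_top G) = gunits G"
  unfolding unit_top_def using garr_of_gunits by (auto simp: garr_def)

lemma etale_groupoidD:
  assumes "etale_groupoid G"
  shows "groupoid G" "topological_groupoid G"
    "continuous_map (gtop G) (unit_top G) (grng G)" "continuous_map (gtop G) (unit_top G) (gsrc G)"
    "continuous_map (gtop G) (gtop G) (ginv G)" "continuous_map (gtop G) (gtop G) (grng G)"
  using assms unfolding etale_groupoid_def topological_groupoid_def unit_top_def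
  by (auto intro: continuous_map_into_fulltopology)

lemma continuous_map_gmult:
  assumes "topological_groupoid G" "continuous_map Z (gtop G) a" "continuous_map Z (gtop G) b"
    and "\<And>z. z \<in> topspace Z \<Longrightarrow> gsrc G (a z) = grng G (b z)"
  shows "continuous_map Z (gtop G) (\<lambda>z. gmult G (a z) (b z))"
proof -
  have mult: "continuous_map (subtopology (prod_topology (gtop G) (gtop G)) (gcomposable G))
      (gtop G) (\<lambda>(g, h). gmult G g h)"
    using assms(1) unfolding topological_groupoid_def by blast
  have "continuous_map Z (prod_topology (gtop G) (gtop G)) (\<lambda>z. (a z, b z))"
    using assms(2,3) by (simp add: continuous_map_paired)
  then have "continuous_map Z (subtopology (prod_topology (gtop G) (gtop G)) (gcomposable G))
      (\<lambda>z. (a z, b z))"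
    by (rule continuous_map_into_subtopology)
       (use assms(4) continuous_map_funspace[OF assms(2)] continuous_map_funspace[OF assms(3)]
         in \<open>auto simp: gcomposable_def garr_def\<close>)
  from continuous_map_compose[OF this mult] show ?thesis
    by (simp add: o_def)
qed

lemma etale_range_local_section:
  assumes "etale_groupoid G" "a \<in> garr G"
  obtains U \<phi> where "openin (gtop G) U" "a \<in> U" "openin (unit_top G) (grng G ` U)"
    "continuous_map (subtopology (unit_top G) (grng G ` U)) (gtop G) \<phi>"
    "\<forall>u\<in>U. \<phi> (grng G u) = u"
proof -
  obtain U where U: "openin (gtop G) U" "a \<in> U" "openin (unit_top G) (grng G ` U)"
      "homeomorphic_map (subtopology (gtop G) U) (subtopology (unit_top G) (grng G ` U)) (grng G)"
    using assms unfolding etale_groupoid_def local_homeo_def garr_def by blast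
  then obtain \<phi> where \<phi>:
    "homeomorphic_maps (subtopology (gtop G) U) (subtopology (unit_top G) (grng G ` U)) (grng G) \<phi>"
    using homeomorphic_map_maps by blast
  have c: "continuous_map (subtopology (unit_top G) (grng G ` U)) (subtopology (gtop G) U) \<phi>"
    using \<phi> unfolding homeomorphic_maps_def by blast
  show ?thesis
  proof (rule that[OF U(1-3)])
    show "continuous_map (subtopology (unit_top G) (grng G ` U)) (gtop G) \<phi>"
      using continuous_map_into_fulltopology[OF c] .
    show "\<forall>u\<in>U. \<phi> (grng G u) = u"
    proof
      fix u assume "u \<in> U"
      then have "u \<in> topspace (subtopology (gtop G) U)"
        using openin_subset[OF U(1)] by auto
      then show "\<phi> (grng G u) = u"
        using \<phi> unfolding homeomorphic_maps_def by blast
    qed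
  qed
qed

lemma etale_source_local_section:
  assumes etale: "etale_groupoid G" and a: "a \<in> garr G"
  obtains U \<psi> where "openin (gtop G) U" "a \<in> U" "openin (unit_top G) (gsrc G ` U)"
    "continuous_map (subtopology (unit_top G) (gsrc G ` U)) (gtop G) \<psi>"
    "\<forall>u\<in>U. \<psi> (gsrc G u) = u"
proof -
  note G = etale_groupoidD[OF etale]
  obtain V \<phi> where V: "openin (gtop G) V" "ginv G a \<in> V" "openin (unit_top G) (grng G ` V)"
      "continuous_map (subtopology (unit_top G) (grng G ` V)) (gtop G) \<phi>"
      "\<forall>v\<in>V. \<phi> (grng G v) = v"
    using etale_range_local_section[OF etale ginv_in_garr[OF G(1) a]] .
  define U where "U = {g \<in> topspace (gtop G). ginv G g \<in> V}"
  have U: "u \<in> U \<longleftrightarrow> u \<in> garr G \<and> ginv G u \<in> V" for u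
    unfolding U_def garr_def by blast
  have V_arr: "V \<subseteq> garr G"
    using openin_subset[OF V(1)] by (simp add: garr_def)
  have "gsrc G ` U = grng G ` V"
  proof (intro equalityI subsetI)
    fix y assume "y \<in> gsrc G ` U"
    then obtain u where "u \<in> garr G" "ginv G u \<in> V" "y = gsrc G u"
      using U by blast
    then show "y \<in> grng G ` V"
      using grng_ginv[OF G(1)] by (metis image_eqI)
  next
    fix y assume "y \<in> grng G ` V"
    then obtain v where v: "v \<in> V" "y = grng G v"
      by blast
    then have "ginv G v \<in> U" "gsrc G (ginv G v) = y"
      using U V_arr ginv_in_garr[OF G(1)] ginv_ginv[OF G(1)] gsrc_ginv[OF G(1)] by auto
    then show "y \<in> gsrc G ` U"
      by (metis image_eqI)
  qed
  moreover have "ginv G (\<phi> (gsrc G u)) = u" if "u \<in> U" for u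
  proof -
    have "u \<in> garr G" "ginv G u \<in> V"
      using that U by blast+
    then show ?thesis
      using V(5) grng_ginv[OF G(1)] ginv_ginv[OF G(1)] by metis
  qed
  moreover have "openin (gtop G) U"
    unfolding U_def using openin_continuous_map_preimage[OF G(5) V(1)] .
  moreover have "a \<in> U"
    using U a V(2) by blast
  ultimately show thesis
    using that[of U "\<lambda>y. ginv G (\<phi> y)"] V(3) continuous_map_compose[OF V(4) G(5)]
    by (simp add: o_def)
qed

lemma openin_gsrc_image_Int:
  assumes S: "openin (unit_top G) (gsrc G ` V)"
    and \<psi>: "continuous_map (subtopology (unit_top G) (gsrc G ` V)) (gtop G) \<psi>"
    and inverse: "\<forall>v\<in>V. \<psi> (gsrc G v) = v" and W: "openin (gtop G) W"
  shows "openin (unit_top G) (gsrc G ` (V \<inter> W))"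
proof -
  have "gsrc G ` (V \<inter> W) = {y \<in> topspace (subtopology (unit_top G) (gsrc G ` V)). \<psi> y \<in> W}"
  proof (intro equalityI subsetI)
    fix y assume "y \<in> gsrc G ` (V \<inter> W)"
    then obtain v where "v \<in> V" "v \<in> W" "y = gsrc G v"
      by blast
    then show "y \<in> {y \<in> topspace (subtopology (unit_top G) (gsrc G ` V)). \<psi> y \<in> W}"
      using inverse openin_subset[OF S] by auto
  next
    fix y assume y: "y \<in> {y \<in> topspace (subtopology (unit_top G) (gsrc G ` V)). \<psi> y \<in> W}"
    then obtain v where "v \<in> V" "y = gsrc G v"
      by auto
    then show "y \<in> gsrc G ` (V \<inter> W)"
      using inverse y by auto
  qed
  then show ?thesis
    using openin_continuous_map_preimage[OF \<psi> W] S openin_trans_full by metis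
qed

definition source_bisection :: "('a, 'b) groupoid_scheme \<Rightarrow> 'a set \<Rightarrow> ('a \<Rightarrow> 'a) \<Rightarrow> bool" where
  "source_bisection G U \<psi> \<longleftrightarrow> openin (gtop G) U \<and> openin (unit_top G) (gsrc G ` U) \<and>
     continuous_map (subtopology (unit_top G) (gsrc G ` U)) (gtop G) \<psi> \<and>
     (\<forall>u\<in>U. \<psi> (gsrc G u) = u) \<and> inj_on (grng G) U"

lemma etale_source_bisection:
  assumes etale: "etale_groupoid G" and a: "a \<in> garr G"
  obtains U \<psi> where "a \<in> U" "source_bisection G U \<psi>"
proof -
  obtain V \<psi> where V: "openin (gtop G) V" "a \<in> V" "openin (unit_top G) (gsrc G ` V)"
      "continuous_map (subtopology (unit_top G) (gsrc G ` V)) (gtop G) \<psi>"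
      "\<forall>v\<in>V. \<psi> (gsrc G v) = v"
    using etale_source_local_section[OF etale a] .
  obtain W \<kappa> where W: "openin (gtop G) W" "a \<in> W" "\<forall>w\<in>W. \<kappa> (grng G w) = w"
    using etale_range_local_section[OF etale a] by metis
  have "openin (unit_top G) (gsrc G ` (V \<inter> W))"
    using openin_gsrc_image_Int[OF V(3-5) W(1)] .
  moreover have "continuous_map (subtopology (unit_top G) (gsrc G ` (V \<inter> W))) (gtop G) \<psi>"
    by (rule continuous_map_from_subtopology_mono[OF V(4)]) blast
  moreover have "inj_on (grng G) (V \<inter> W)"
    using W(3) by (metis IntD2 inj_on_inverseI)
  ultimately have "source_bisection G (V \<inter> W) \<psi>"
    unfolding source_bisection_def using V(1,5) W(1) by blast
  then show thesis
    using that V(2) W(2) by blast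
qed

lemma source_bisection_subset: "source_bisection G U \<psi> \<Longrightarrow> U \<subseteq> garr G"
  unfolding source_bisection_def garr_def using openin_subset by blast

lemma source_bisection_section:
  "\<lbrakk>source_bisection G U \<psi>; y \<in> gsrc G ` U\<rbrakk> \<Longrightarrow> \<psi> y \<in> U \<and> gsrc G (\<psi> y) = y"
  unfolding source_bisection_def by auto

lemma continuous_map_source_bisection_comp:
  assumes "source_bisection G U \<psi>" "continuous_map X (unit_top G) f" "f ` topspace X \<subseteq> gsrc G ` U"
  shows "continuous_map X (gtop G) (\<lambda>x. \<psi> (f x))"
proof -
  have "continuous_map X (subtopology (unit_top G) (gsrc G ` U)) f"
    using assms(2,3) by (simp add: continuous_map_into_subtopology image_subset_iff_funcset)
  then show ?thesis
    using assms(1) continuous_map_compose unfolding source_bisection_def o_def by fastforce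
qed

lemma etale_units_openin:
  assumes etale: "etale_groupoid G"
  shows "openin (gtop G) (gunits G)"
proof (subst openin_subopen, intro ballI)
  note G = etale_groupoidD[OF etale]
  fix x assume x: "x \<in> gunits G"
  obtain U \<phi> where U: "openin (gtop G) U" "x \<in> U" "\<forall>u\<in>U. \<phi> (grng G u) = u"
    using etale_range_local_section[OF etale garr_of_gunits[OF G(1) x]] by metis
  define T where "T = {g \<in> topspace (gtop G). grng G g \<in> U} \<inter> U"
  have "openin (gtop G) T"
    unfolding T_def using openin_continuous_map_preimage[OF G(6) U(1)] U(1) by blast
  moreover have "x \<in> T"
    using garr_of_gunits[OF G(1) x] grng_unit[OF G(1) x] U(2) unfolding T_def garr_def by simp
  moreover have "T \<subseteq> gunits G"
  proof
    fix g assume g: "g \<in> T"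
    then have g_arr: "g \<in> garr G" and "g \<in> U" "grng G g \<in> U"
      unfolding T_def garr_def by auto
    then have "g = grng G g"
      using U(3) grng_unit[OF G(1) grng_in_gunits[OF G(1) g_arr]] by metis
    then show "g \<in> gunits G"
      using grng_in_gunits[OF G(1) g_arr] by simp
  qed
  ultimately show "\<exists>T. openin (gtop G) T \<and> x \<in> T \<and> T \<subseteq> gunits G" by blast
qed

section \<open>Reductions\<close>

lemma reduction_simps [simp]:
  "gunits (reduction G F) = F" "grng (reduction G F) = grng G" "gsrc (reduction G F) = gsrc G"
  "gmult (reduction G F) = gmult G" "ginv (reduction G F) = ginv G"
  by (simp_all add: reduction_def)

lemma garr_reduction: "garr (reduction G F) = {g \<in> garr G. grng G g \<in> F \<and> gsrc G g \<in> F}"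
  by (auto simp: garr_def reduction_def)

lemma gtop_reduction: "gtop (reduction G F) = subtopology (gtop G) (garr (reduction G F))"
  unfolding garr_reduction by (simp add: reduction_def)

lemma openin_garr_reduction:
  assumes "etale_groupoid G" "openin (unit_top G) F"
  shows "openin (gtop G) (garr (reduction G F))"
proof -
  note G = etale_groupoidD[OF assms(1)]
  have "openin (gtop G) ({g \<in> topspace (gtop G). grng G g \<in> F} \<inter> {g \<in> topspace (gtop G). gsrc G g \<in> F})"
    using openin_continuous_map_preimage[OF G(3) assms(2)]
      openin_continuous_map_preimage[OF G(4) assms(2)] by blast
  moreover have "{g \<in> topspace (gtop G). grng G g \<in> F} \<inter> {g \<in> topspace (gtop G). gsrc G g \<in> F} =
      garr (reduction G F)"
    unfolding garr_reduction by (auto simp: garr_def)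
  ultimately show ?thesis by simp
qed

lemma unit_top_reduction:
  assumes "groupoid G" "F \<subseteq> gunits G"
  shows "unit_top (reduction G F) = subtopology (gtop G) F"
proof -
  have "F \<subseteq> garr (reduction G F)"
    using assms garr_of_gunits by (fastforce simp: garr_reduction)
  then show ?thesis
    unfolding unit_top_def gtop_reduction[of G F] by (simp add: subtopology_subtopology Int_absorb1)
qed

lemma etale_hom_reduction_inclusion:
  assumes "etale_groupoid G" "openin (unit_top G) F"
  shows "etale_hom (reduction G F) G id"
  unfolding etale_hom_def groupoid_hom_def
proof (intro conjI ballI)
  show "continuous_map (gtop (reduction G F)) (gtop G) id"
    by (simp add: gtop_reduction[of G F] continuous_map_from_subtopology)
  show "local_homeo (gtop (reduction G F)) (gtop G) id"
    unfolding local_homeo_def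
  proof (intro conjI ballI)
    show "id \<in> topspace (gtop (reduction G F)) \<rightarrow> topspace (gtop G)"
      by (auto simp: gtop_reduction[of G F])
    fix x assume "x \<in> topspace (gtop (reduction G F))"
    then show "\<exists>U. openin (gtop (reduction G F)) U \<and> x \<in> U \<and> openin (gtop G) (id ` U) \<and>
        homeomorphic_map (subtopology (gtop (reduction G F)) U) (subtopology (gtop G) (id ` U)) id"
      using openin_garr_reduction[OF assms] openin_subset[OF openin_garr_reduction[OF assms]]
      by (intro exI[of _ "garr (reduction G F)"])
         (simp add: gtop_reduction[of G F] subtopology_subtopology openin_subtopology_refl)
  qed
next
  fix p assume "p \<in> gcomposable (reduction G F)"
  then show "case p of (g, h) \<Rightarrow>
      (id g, id h) \<in> gcomposable G \<and> id (gmult (reduction G F) g h) = gmult G (id g) (id h)"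
    by (auto simp: gcomposable_def garr_reduction)
qed

section \<open>A section into F yields a homological similarity\<close>

locale full_section =
  fixes G :: "'a groupoid" and F :: "'a set" and \<theta> :: "'a \<Rightarrow> 'a"
  assumes etale: "etale_groupoid G"
    and F_open: "openin (unit_top G) F"
    and F_units: "F \<subseteq> gunits G"
    and \<theta>_cont: "continuous_map (unit_top G) (gtop G) \<theta>"
    and \<theta>_section: "\<forall>x\<in>gunits G. grng G (\<theta> x) = x \<and> gsrc G (\<theta> x) \<in> F"
begin

lemma groupoid [simp]: "groupoid G"
  using etale_groupoidD(1)[OF etale] .

lemma \<theta>_in_garr [simp]: "x \<in> gunits G \<Longrightarrow> \<theta> x \<in> garr G"
  using continuous_map_funspace[OF \<theta>_cont] topspace_unit_top[OF groupoid] by (auto simp: garr_def)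

lemma grng_\<theta> [simp]: "x \<in> gunits G \<Longrightarrow> grng G (\<theta> x) = x"
  and gsrc_\<theta>_in_F: "x \<in> gunits G \<Longrightarrow> gsrc G (\<theta> x) \<in> F"
  using \<theta>_section by blast+

lemma continuous_map_\<theta>_grng: "continuous_map (gtop G) (gtop G) (\<lambda>g. \<theta> (grng G g))"
  and continuous_map_\<theta>_gsrc: "continuous_map (gtop G) (gtop G) (\<lambda>g. \<theta> (gsrc G g))"
  using continuous_map_compose[OF etale_groupoidD(3)[OF etale] \<theta>_cont]
    continuous_map_compose[OF etale_groupoidD(4)[OF etale] \<theta>_cont] by (simp_all add: o_def)

definition rho :: "'a \<Rightarrow> 'a" where
  "rho g = gmult G (ginv G (\<theta> (grng G g))) (gmult G g (\<theta> (gsrc G g)))"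

lemma rho_in_garr [simp]: "g \<in> garr G \<Longrightarrow> rho g \<in> garr G"
  and grng_rho [simp]: "g \<in> garr G \<Longrightarrow> grng G (rho g) = gsrc G (\<theta> (grng G g))"
  and gsrc_rho [simp]: "g \<in> garr G \<Longrightarrow> gsrc G (rho g) = gsrc G (\<theta> (gsrc G g))"
  by (simp_all add: rho_def)

lemma rho_in_reduction: "g \<in> garr G \<Longrightarrow> rho g \<in> garr (reduction G F)"
  using gsrc_\<theta>_in_F by (simp add: garr_reduction)

lemma rho_gmult:
  "\<lbrakk>g \<in> garr G; h \<in> garr G; gsrc G g = grng G h\<rbrakk> \<Longrightarrow> rho (gmult G g h) = gmult G (rho g) (rho h)"
  by (simp add: rho_def)

lemma continuous_map_rho: "continuous_map (gtop G) (gtop G) rho"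
proof -
  note G = etale_groupoidD[OF etale]
  have "continuous_map (gtop G) (gtop G) (\<lambda>g. gmult G g (\<theta> (gsrc G g)))"
    by (rule continuous_map_gmult[OF G(2) continuous_map_id[unfolded id_def] continuous_map_\<theta>_gsrc])
       (simp add: garr_def[symmetric])
  then show ?thesis
    unfolding rho_def
    by (rule continuous_map_gmult[OF G(2) continuous_map_compose[OF continuous_map_\<theta>_grng G(5),
          unfolded o_def]])
       (simp add: garr_def[symmetric])
qed

lemma continuous_map_rho_reduction: "continuous_map (gtop G) (gtop (reduction G F)) rho"
  unfolding gtop_reduction[of G F] using continuous_map_rho rho_in_reduction
  by (auto intro: continuous_map_into_subtopology simp: garr_def[symmetric])

lemma groupoid_hom_rho: "groupoid_hom G (reduction G F) rho"
  unfolding groupoid_hom_def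
proof (intro conjI continuous_map_rho_reduction ballI)
  fix p assume "p \<in> gcomposable G"
  then obtain g h where p: "p = (g, h)" "g \<in> garr G" "h \<in> garr G" "gsrc G g = grng G h"
    by (auto simp: gcomposable_def)
  then show "case p of (g, h) \<Rightarrow> (rho g, rho h) \<in> gcomposable (reduction G F) \<and>
      rho (gmult G g h) = gmult (reduction G F) (rho g) (rho h)"
    using rho_in_reduction rho_gmult by (simp add: gcomposable_def)
qed

lemma similar_rho: "similar G G (id \<circ> rho) id"
  unfolding similar_def
proof (intro exI conjI ballI)
  show "continuous_map (unit_top G) (gtop G) \<theta>"
    by (rule \<theta>_cont)
  fix g assume "g \<in> garr G"
  then show "(\<theta> (grng G g), (id \<circ> rho) g) \<in> gcomposable G" "(id g, \<theta> (gsrc G g)) \<in> gcomposable G"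
    "gmult G (\<theta> (grng G g)) ((id \<circ> rho) g) = gmult G (id g) (\<theta> (gsrc G g))"
    by (simp_all add: gcomposable_def rho_def)
qed

lemma similar_rho_reduction: "similar (reduction G F) (reduction G F) (rho \<circ> id) id"
  unfolding similar_def
proof (intro exI conjI ballI)
  have "continuous_map (subtopology (gtop G) F) (gtop G) \<theta>"
    using \<theta>_cont F_units unfolding unit_top_def by (metis continuous_map_from_subtopology_mono)
  then show "continuous_map (unit_top (reduction G F)) (gtop (reduction G F)) \<theta>"
    unfolding unit_top_reduction[OF groupoid F_units] gtop_reduction[of G F]
    using F_units gsrc_\<theta>_in_F
    by (intro continuous_map_into_subtopology) (auto simp: garr_reduction subset_iff)
  fix g assume "g \<in> garr (reduction G F)"
  then have g: "g \<in> garr G" "grng G g \<in> F" "gsrc G g \<in> F"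
    by (auto simp: garr_reduction)
  then have "grng G g \<in> gunits G" "gsrc G g \<in> gunits G"
    by simp_all
  then have "\<theta> (grng G g) \<in> garr (reduction G F)" "\<theta> (gsrc G g) \<in> garr (reduction G F)"
    using g gsrc_\<theta>_in_F by (simp_all add: garr_reduction)
  then show "(\<theta> (grng (reduction G F) g), (rho \<circ> id) g) \<in> gcomposable (reduction G F)"
    "(id g, \<theta> (gsrc (reduction G F) g)) \<in> gcomposable (reduction G F)"
    "gmult (reduction G F) (\<theta> (grng (reduction G F) g)) ((rho \<circ> id) g) =
       gmult (reduction G F) (id g) (\<theta> (gsrc (reduction G F) g))"
    using g rho_in_reduction[OF g(1)] \<open>g \<in> garr (reduction G F)\<close>
    by (simp_all add: gcomposable_def rho_def)
qed

text \<open>\<open>tau \<psi>a \<psi>b\<close> is the local inverse of \<open>rho\<close> near an arrow g, when \<open>\<psi>a\<close> and \<open>\<psi>b\<close> invert the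
  source map on bisections around \<open>\<theta> (r g)\<close> and \<open>\<theta> (s g)\<close>.\<close>

definition tau :: "('a \<Rightarrow> 'a) \<Rightarrow> ('a \<Rightarrow> 'a) \<Rightarrow> 'a \<Rightarrow> 'a" where
  "tau \<psi>a \<psi>b h = gmult G (\<psi>a (grng G h)) (gmult G h (ginv G (\<psi>b (gsrc G h))))"

definition tau_support :: "'a set \<Rightarrow> 'a set \<Rightarrow> 'a set" where
  "tau_support Ua Ub = {h \<in> garr G. grng G h \<in> gsrc G ` Ua \<and> gsrc G h \<in> gsrc G ` Ub}"

definition rho_domain :: "'a set \<Rightarrow> 'a set \<Rightarrow> 'a set" where
  "rho_domain Ua Ub = {g \<in> garr G. \<theta> (grng G g) \<in> Ua \<and> \<theta> (gsrc G g) \<in> Ub}"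

definition tau_domain :: "'a set \<Rightarrow> 'a set \<Rightarrow> ('a \<Rightarrow> 'a) \<Rightarrow> ('a \<Rightarrow> 'a) \<Rightarrow> 'a set" where
  "tau_domain Ua Ub \<psi>a \<psi>b =
     {h \<in> tau_support Ua Ub \<inter> garr (reduction G F). tau \<psi>a \<psi>b h \<in> rho_domain Ua Ub}"

context
  fixes Ua Ub :: "'a set" and \<psi>a \<psi>b :: "'a \<Rightarrow> 'a"
  assumes Ua: "source_bisection G Ua \<psi>a" and Ub: "source_bisection G Ub \<psi>b"
begin

lemma tau_rho:
  assumes g: "g \<in> garr G" "\<theta> (grng G g) \<in> Ua" "\<theta> (gsrc G g) \<in> Ub"
  shows "tau \<psi>a \<psi>b (rho g) = g"
proof -
  have "\<psi>a (grng G (rho g)) = \<theta> (grng G g)" "\<psi>b (gsrc G (rho g)) = \<theta> (gsrc G g)"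
    using g Ua Ub unfolding source_bisection_def by simp_all
  then show ?thesis
    unfolding tau_def using g(1) by (simp add: rho_def)
qed

lemma rho_tau:
  assumes h: "h \<in> garr G" "grng G h \<in> gsrc G ` Ua" "gsrc G h \<in> gsrc G ` Ub"
    and tau_h: "\<theta> (grng G (tau \<psi>a \<psi>b h)) \<in> Ua" "\<theta> (gsrc G (tau \<psi>a \<psi>b h)) \<in> Ub"
  shows "rho (tau \<psi>a \<psi>b h) = h"
proof -
  obtain a: "\<psi>a (grng G h) \<in> Ua" "gsrc G (\<psi>a (grng G h)) = grng G h"
    and b: "\<psi>b (gsrc G h) \<in> Ub" "gsrc G (\<psi>b (gsrc G h)) = gsrc G h"
    using source_bisection_section[OF Ua h(2)] source_bisection_section[OF Ub h(3)] by blast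
  have arr: "\<psi>a (grng G h) \<in> garr G" "\<psi>b (gsrc G h) \<in> garr G"
    using a(1) b(1) source_bisection_subset[OF Ua] source_bisection_subset[OF Ub] by blast+
  have "grng G (tau \<psi>a \<psi>b h) = grng G (\<psi>a (grng G h))" "gsrc G (tau \<psi>a \<psi>b h) = grng G (\<psi>b (gsrc G h))"
    using h(1) arr a(2) b(2) by (simp_all add: tau_def)
  then have "grng G (\<theta> (grng G (tau \<psi>a \<psi>b h))) = grng G (\<psi>a (grng G h))"
    "grng G (\<theta> (gsrc G (tau \<psi>a \<psi>b h))) = grng G (\<psi>b (gsrc G h))"
    using arr by simp_all
  then have "\<theta> (grng G (tau \<psi>a \<psi>b h)) = \<psi>a (grng G h)" "\<theta> (gsrc G (tau \<psi>a \<psi>b h)) = \<psi>b (gsrc G h)"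
    using inj_onD[OF _ _ tau_h(1) a(1)] inj_onD[OF _ _ tau_h(2) b(1)] Ua Ub
    unfolding source_bisection_def by blast+
  then show ?thesis
    unfolding rho_def using h(1) arr a(2) b(2) by (simp add: tau_def)
qed

lemma continuous_map_tau: "continuous_map (subtopology (gtop G) (tau_support Ua Ub)) (gtop G) (tau \<psi>a \<psi>b)"
proof -
  note G = etale_groupoidD[OF etale]
  define X where "X = subtopology (gtop G) (tau_support Ua Ub)"
  have X: "topspace X = tau_support Ua Ub"
    unfolding X_def tau_support_def by (auto simp: garr_def)
  have a: "continuous_map X (gtop G) (\<lambda>h. \<psi>a (grng G h))"
    by (rule continuous_map_source_bisection_comp[OF Ua])
       (auto simp: X X_def tau_support_def intro: continuous_map_from_subtopology G(3))
  have "continuous_map X (gtop G) (\<lambda>h. \<psi>b (gsrc G h))"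
    by (rule continuous_map_source_bisection_comp[OF Ub])
       (auto simp: X X_def tau_support_def intro: continuous_map_from_subtopology G(4))
  then have b: "continuous_map X (gtop G) (\<lambda>h. ginv G (\<psi>b (gsrc G h)))"
    using continuous_map_compose[OF _ G(5)] by (simp add: o_def)
  have \<psi>_props: "\<psi>a (grng G h) \<in> garr G" "gsrc G (\<psi>a (grng G h)) = grng G h"
      "\<psi>b (gsrc G h) \<in> garr G" "gsrc G (\<psi>b (gsrc G h)) = gsrc G h" if "h \<in> topspace X" for h
    using that source_bisection_section[OF Ua] source_bisection_section[OF Ub]
      source_bisection_subset[OF Ua] source_bisection_subset[OF Ub]
    unfolding X tau_support_def by blast+
  have "continuous_map X (gtop G) (\<lambda>h. gmult G h (ginv G (\<psi>b (gsrc G h))))"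
    by (rule continuous_map_gmult[OF G(2) _ b])
       (use \<psi>_props in \<open>auto simp: X_def intro: continuous_map_from_subtopology\<close>)
  then show ?thesis
    unfolding X_def[symmetric] tau_def
    by (rule continuous_map_gmult[OF G(2) a]) (use \<psi>_props X in \<open>auto simp: tau_support_def\<close>)
qed

lemma openin_rho_domain: "openin (gtop G) (rho_domain Ua Ub)"
proof -
  have "rho_domain Ua Ub = {g \<in> topspace (gtop G). \<theta> (grng G g) \<in> Ua} \<inter>
      {g \<in> topspace (gtop G). \<theta> (gsrc G g) \<in> Ub}"
    unfolding rho_domain_def garr_def by blast
  then show ?thesis
    using openin_continuous_map_preimage[OF continuous_map_\<theta>_grng] Ua
      openin_continuous_map_preimage[OF continuous_map_\<theta>_gsrc] Ub
    unfolding source_bisection_def by auto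
qed

lemma openin_tau_support: "openin (gtop G) (tau_support Ua Ub)"
proof -
  note G = etale_groupoidD[OF etale]
  have "tau_support Ua Ub = {h \<in> topspace (gtop G). grng G h \<in> gsrc G ` Ua} \<inter>
      {h \<in> topspace (gtop G). gsrc G h \<in> gsrc G ` Ub}"
    unfolding tau_support_def garr_def by blast
  then show ?thesis
    using openin_continuous_map_preimage[OF G(3)] Ua openin_continuous_map_preimage[OF G(4)] Ub
    unfolding source_bisection_def by auto
qed

lemma openin_tau_domain: "openin (gtop (reduction G F)) (tau_domain Ua Ub \<psi>a \<psi>b)"
proof -
  have "openin (subtopology (gtop G) (tau_support Ua Ub))
      {h \<in> topspace (subtopology (gtop G) (tau_support Ua Ub)). tau \<psi>a \<psi>b h \<in> rho_domain Ua Ub}"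
    using openin_continuous_map_preimage[OF continuous_map_tau openin_rho_domain] .
  moreover have "tau_domain Ua Ub \<psi>a \<psi>b = {h \<in> topspace (subtopology (gtop G) (tau_support Ua Ub)).
      tau \<psi>a \<psi>b h \<in> rho_domain Ua Ub} \<inter> garr (reduction G F)"
    unfolding tau_domain_def by (auto simp: tau_support_def garr_def[of G])
  ultimately have "openin (gtop G) (tau_domain Ua Ub \<psi>a \<psi>b)"
    using openin_trans_full[OF _ openin_tau_support] openin_garr_reduction[OF etale F_open] by auto
  then show ?thesis
    unfolding gtop_reduction[of G F]
    using openin_open_subtopology[OF openin_garr_reduction[OF etale F_open]]
    by (auto simp: tau_domain_def)
qed

lemma continuous_map_tau_domain:
  "continuous_map (subtopology (gtop (reduction G F)) (tau_domain Ua Ub \<psi>a \<psi>b)) (gtop G) (tau \<psi>a \<psi>b)"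
  unfolding gtop_reduction[of G F] subtopology_subtopology
  by (rule continuous_map_from_subtopology_mono[OF continuous_map_tau]) (auto simp: tau_domain_def)

lemma rho_in_tau_domain:
  assumes "u \<in> rho_domain Ua Ub"
  shows "rho u \<in> tau_domain Ua Ub \<psi>a \<psi>b" "tau \<psi>a \<psi>b (rho u) = u"
proof -
  have u: "u \<in> garr G" "\<theta> (grng G u) \<in> Ua" "\<theta> (gsrc G u) \<in> Ub"
    using assms unfolding rho_domain_def by auto
  show "tau \<psi>a \<psi>b (rho u) = u"
    using tau_rho[OF u] .
  then show "rho u \<in> tau_domain Ua Ub \<psi>a \<psi>b"
    using u assms rho_in_reduction[OF u(1)] unfolding tau_domain_def tau_support_def by auto
qed

lemma tau_in_rho_domain:
  assumes "v \<in> tau_domain Ua Ub \<psi>a \<psi>b"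
  shows "tau \<psi>a \<psi>b v \<in> rho_domain Ua Ub" "rho (tau \<psi>a \<psi>b v) = v"
proof -
  have v: "v \<in> garr G" "grng G v \<in> gsrc G ` Ua" "gsrc G v \<in> gsrc G ` Ub"
    and "tau \<psi>a \<psi>b v \<in> rho_domain Ua Ub"
    using assms unfolding tau_domain_def tau_support_def by auto
  then show "tau \<psi>a \<psi>b v \<in> rho_domain Ua Ub" "rho (tau \<psi>a \<psi>b v) = v"
    using rho_tau[OF v] unfolding rho_domain_def by blast+
qed

end

lemma local_homeo_rho: "local_homeo (gtop G) (gtop (reduction G F)) rho"
proof (rule local_homeoI[OF continuous_map_rho_reduction])
  fix g assume "g \<in> topspace (gtop G)"
  then have g: "g \<in> garr G"
    by (simp add: garr_def)
  then have "\<theta> (grng G g) \<in> garr G" "\<theta> (gsrc G g) \<in> garr G"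
    by simp_all
  then obtain Ua \<psi>a Ub \<psi>b where a: "\<theta> (grng G g) \<in> Ua" "source_bisection G Ua \<psi>a"
    and b: "\<theta> (gsrc G g) \<in> Ub" "source_bisection G Ub \<psi>b"
    using etale_source_bisection[OF etale] by metis
  have "g \<in> rho_domain Ua Ub"
    using g a(1) b(1) by (simp add: rho_domain_def)
  then show "\<exists>U V h. openin (gtop G) U \<and> g \<in> U \<and> openin (gtop (reduction G F)) V \<and>
      continuous_map (subtopology (gtop (reduction G F)) V) (gtop G) h \<and>
      (\<forall>u\<in>U. rho u \<in> V \<and> h (rho u) = u) \<and> (\<forall>v\<in>V. h v \<in> U \<and> rho (h v) = v)"
    using openin_rho_domain[OF a(2) b(2)] openin_tau_domain[OF a(2) b(2)]
      continuous_map_tau_domain[OF a(2) b(2)]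
      rho_in_tau_domain[OF a(2) b(2)] tau_in_rho_domain[OF a(2) b(2)]
    by blast
qed

lemma homologically_similar_reduction: "homologically_similar G (reduction G F)"
  unfolding homologically_similar_def
proof (intro exI conjI)
  show "etale_hom G (reduction G F) rho"
    unfolding etale_hom_def using groupoid_hom_rho local_homeo_rho by blast
qed (fact etale_hom_reduction_inclusion[OF etale F_open] similar_rho similar_rho_reduction)+

end

section \<open>Sections over totally disconnected unit spaces\<close>

definition full_section_on :: "('a, 'b) groupoid_scheme \<Rightarrow> 'a set \<Rightarrow> 'a set \<Rightarrow> ('a \<Rightarrow> 'a) \<Rightarrow> bool" where
  "full_section_on G F W \<phi> \<longleftrightarrow> continuous_map (subtopology (unit_top G) W) (gtop G) \<phi> \<and>
     (\<forall>y\<in>W. grng G (\<phi> y) = y \<and> gsrc G (\<phi> y) \<in> F)"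

lemma full_section_on_subset:
  "\<lbrakk>full_section_on G F W \<phi>; W' \<subseteq> W\<rbrakk> \<Longrightarrow> full_section_on G F W' \<phi>"
  unfolding full_section_on_def using continuous_map_from_subtopology_mono by blast

lemma etale_full_local_section:
  assumes etale: "etale_groupoid G" and F_open: "openin (unit_top G) F" and full: "G_full G F"
    and x: "x \<in> gunits G"
  obtains W \<phi> where "openin (unit_top G) W" "x \<in> W" "full_section_on G F W \<phi>"
proof -
  note G = etale_groupoidD[OF etale]
  obtain g where g: "g \<in> garr G" "grng G g = x" "gsrc G g \<in> F"
    using full x unfolding G_full_def by blast
  obtain U \<phi> where U: "openin (gtop G) U" "g \<in> U" "openin (unit_top G) (grng G ` U)"
      "continuous_map (subtopology (unit_top G) (grng G ` U)) (gtop G) \<phi>"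
      "\<forall>u\<in>U. \<phi> (grng G u) = u"
    using etale_range_local_section[OF etale g(1)] .
  define W where "W = {y \<in> topspace (subtopology (unit_top G) (grng G ` U)). gsrc G (\<phi> y) \<in> F}"
  have "continuous_map (subtopology (unit_top G) (grng G ` U)) (unit_top G) (\<lambda>y. gsrc G (\<phi> y))"
    using continuous_map_compose[OF U(4) G(4)] by (simp add: o_def)
  then have "openin (subtopology (unit_top G) (grng G ` U)) W"
    unfolding W_def using F_open by (rule openin_continuous_map_preimage)
  then have "openin (unit_top G) W"
    using U(3) openin_trans_full by blast
  moreover have "x \<in> W"
    using g U(2,5) x topspace_unit_top[OF G(1)] unfolding W_def by force
  moreover have "full_section_on G F W \<phi>"
    unfolding full_section_on_def
  proof (intro conjI ballI)
    show "continuous_map (subtopology (unit_top G) W) (gtop G) \<phi>"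
      by (rule continuous_map_from_subtopology_mono[OF U(4)]) (auto simp: W_def)
    fix y assume "y \<in> W"
    then show "grng G (\<phi> y) = y" "gsrc G (\<phi> y) \<in> F"
      using U(5) unfolding W_def by auto
  qed
  ultimately show thesis
    using that by blast
qed

lemma etale_full_clopen_local_section:
  assumes etale: "etale_groupoid G" and F_open: "openin (unit_top G) F" and full: "G_full G F"
    and td: "totally_disconnected_space (unit_top G)" and x: "x \<in> gunits G"
  obtains C \<phi> where "openin (unit_top G) C" "closedin (unit_top G) C" "x \<in> C"
    "full_section_on G F C \<phi>"
proof -
  have "locally_compact_space (unit_top G)"
    unfolding unit_top_def
    using etale etale_units_openin locally_compact_space_open_subset etale_groupoid_def by blast
  moreover have "Hausdorff_space (unit_top G)"
    unfolding unit_top_def using etale Hausdorff_space_subtopology etale_groupoid_def by blast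
  moreover obtain W \<phi> where W: "openin (unit_top G) W" "x \<in> W" "full_section_on G F W \<phi>"
    using etale_full_local_section[OF etale F_open full x] .
  ultimately obtain C where "openin (unit_top G) C" "closedin (unit_top G) C" "x \<in> C" "C \<subseteq> W"
    using locally_compact_totally_disconnected_clopen_base[OF _ _ td W(1,2)] by blast
  then show thesis
    using that full_section_on_subset[OF W(3)] by blast
qed

lemma etale_full_section_exists:
  assumes etale: "etale_groupoid G" and F_open: "openin (unit_top G) F" and full: "G_full G F"
    and sigma: "sigma_compact_space (unit_top G)" and td: "totally_disconnected_space (unit_top G)"
  obtains \<theta> where "continuous_map (unit_top G) (gtop G) \<theta>"
    "\<forall>x\<in>gunits G. grng G (\<theta> x) = x \<and> gsrc G (\<theta> x) \<in> F"
proof -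
  have units: "topspace (unit_top G) = gunits G"
    using topspace_unit_top[OF etale_groupoidD(1)[OF etale]] .
  obtain \<theta> where \<theta>: "continuous_map (unit_top G) (gtop G) \<theta>"
    "\<And>x. x \<in> topspace (unit_top G) \<Longrightarrow> \<exists>C \<phi>. x \<in> C \<and> full_section_on G F C \<phi> \<and> \<theta> x = \<phi> x"
  proof (rule sigma_compact_clopen_pasting[OF sigma])
    show "\<exists>C \<phi>. openin (unit_top G) C \<and> closedin (unit_top G) C \<and> x \<in> C \<and> full_section_on G F C \<phi>"
      if "x \<in> topspace (unit_top G)" for x
      using etale_full_clopen_local_section[OF etale F_open full td] that units by metis
    show "continuous_map (subtopology (unit_top G) C) (gtop G) \<phi>" if "full_section_on G F C \<phi>" for C \<phi>
      using that unfolding full_section_on_def by blast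
  qed (rule that)
  moreover have "\<forall>x\<in>gunits G. grng G (\<theta> x) = x \<and> gsrc G (\<theta> x) \<in> F"
    using \<theta>(2) units unfolding full_section_on_def by fastforce
  ultimately show thesis
    using that by blast
qed

theorem theorem3p6:
  fixes G :: "'a groupoid" and F :: "'a set"
  assumes "etale_groupoid G"
    and "openin (unit_top G) F"
    and "G_full G F"
  shows "((\<exists>\<theta>. continuous_map (unit_top G) (gtop G) \<theta> \<and>
            (\<forall>x \<in> gunits G. grng G (\<theta> x) = x \<and> gsrc G (\<theta> x) \<in> F))
          \<longrightarrow> homologically_similar G (reduction G F))
     \<and> ((sigma_compact_space (unit_top G) \<and> totally_disconnected_space (unit_top G))
          \<longrightarrow> homologically_similar G (reduction G F))"
proof -
  have F_units: "F \<subseteq> gunits G"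
    using assms(3) unfolding G_full_def by blast
  have section_imp_similar: "homologically_similar G (reduction G F)"
    if "continuous_map (unit_top G) (gtop G) \<theta>" "\<forall>x\<in>gunits G. grng G (\<theta> x) = x \<and> gsrc G (\<theta> x) \<in> F"
    for \<theta>
    using full_section.homologically_similar_reduction[OF full_section.intro[OF assms(1,2) F_units that]] .
  show ?thesis
  proof (intro conjI impI)
    show "homologically_similar G (reduction G F)"
      if "\<exists>\<theta>. continuous_map (unit_top G) (gtop G) \<theta> \<and>
            (\<forall>x \<in> gunits G. grng G (\<theta> x) = x \<and> gsrc G (\<theta> x) \<in> F)"
      using that section_imp_similar by blast
    assume "sigma_compact_space (unit_top G) \<and> totally_disconnected_space (unit_top G)"
    then obtain \<theta> where "continuous_map (unit_top G) (gtop G) \<theta>"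
        "\<forall>x\<in>gunits G. grng G (\<theta> x) = x \<and> gsrc G (\<theta> x) \<in> F"
      using etale_full_section_exists[OF assms] by blast
    then show "homologically_similar G (reduction G F)"
      by (rule section_imp_similar)
  qed
qed

end
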